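(* Let $\Gamma$ be a variation of FSSP that has a solution. Then $\Gamma$ has a minimal-time solution if and only if there is a constant $c$ such that $\mathrm{mss}_\Gamma(C)\le c$ for every configuration $C$ of $\Gamma$.
   Context: Fix $k\ge1$; positions are elements of $\mathbb{Z}^k$, and with $\epsilon_0,\dots,\epsilon_{2k-1}$ the vectors $\pm e_1,\dots,\pm e_k$ in a fixed order, $\mathrm{bc}_C(p)\in\{0,1\}^{2k}$ has $i$-th entry $1$ iff $p+\epsilon_i\in C$. A variation $\Gamma$ of FSSP is specified by a set of configurations, each a finite set of positions containing the origin (the general). Firing squad model (boundary-sensitive): a finite automaton $A$ has a finite state set with quiescent state $\mathrm{Q}$, general states $\mathrm{G}_0,\dots,\mathrm{G}_{m-1}$, firing states $\mathcal F\not\ni\mathrm{Q}$, a map $\tau:\{0,1\}^{2k}\to\{0,\dots,m-1\}$ and a transition function from the current state and the $2k$ neighbour states ($\#$ where no node), with $\mathrm{Q}$ stable when all inputs lie in $\{\mathrm{Q},\#\}$. With a copy of $A$ at each position of a configuration $C$, at time $0$ the origin is in $\mathrm{G}_{\tau(\mathrm{bc}_C(\text{origin}))}$ and all other nodes in $\mathrm{Q}$; nodes update synchronously. $A$ is a solution of $\Gamma$ if for every configuration $C$ of $\Gamma$ there is a time $t_C$ such that no node is in $\mathcal F$ before $t_C$ and all nodes are in $\mathcal F$ at $t_C$; write $\mathrm{ft}(C,A)=t_C$. $\mathrm{mft}_\Gamma(C)=\min_A\mathrm{ft}(C,A)$ over all solutions $A$. A minimal-time solution is a solution $\tilde A$ with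 $\mathrm{ft}(C,\tilde A)=\mathrm{mft}_\Gamma(C)$ for every configuration $C$ (equivalently, $\mathrm{ft}(C,\tilde A)\le\mathrm{ft}(C,A)$ for all solutions $A$ and all $C$). $\mathrm{mss}_\Gamma(C)$ is the minimum number of states of a solution $A$ of $\Gamma$ with $\mathrm{ft}(C,A)=\mathrm{mft}_\Gamma(C)$. *)

theory Defs
  imports Main
begin

text \<open>Positions in Z^k are integer lists of length k. The origin is the zero list.\<close>

definition origin :: "nat \<Rightarrow> int list" where
  "origin k = replicate k 0"

definition vadd :: "int list \<Rightarrow> int list \<Rightarrow> int list" where
  "vadd p q = map2 (+) p q"

text \<open>Fixed order of the 2k unit vectors: eps i = e_i for i < k, eps i = - e_(i-k) for k <= i < 2k
  (indices of e counted from 0).\<close>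
definition eps :: "nat \<Rightarrow> nat \<Rightarrow> int list" where
  "eps k i = map (\<lambda>j. if j = i mod k then (if i < k then 1 else -1) else 0) [0..<k]"

definition bc :: "nat \<Rightarrow> int list set \<Rightarrow> int list \<Rightarrow> bool list" where
  "bc k C p = map (\<lambda>i. vadd p (eps k i) \<in> C) [0..<2*k]"

definition variation :: "nat \<Rightarrow> int list set set \<Rightarrow> bool" where
  "variation k \<Gamma> \<longleftrightarrow> (\<forall>C\<in>\<Gamma>. finite C \<and> origin k \<in> C \<and> (\<forall>p\<in>C. length p = k))"

text \<open>Firing squad automata; states are encoded as natural numbers (every finite state set
  is isomorphic to a finite set of naturals). The neighbour symbol # is None.\<close>
record fssp_aut =
  states :: "nat set"
  quiescent :: nat
  ngen :: nat
  gen :: "nat \<Rightarrow> nat"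
  firing :: "nat set"
  tau :: "bool list \<Rightarrow> nat"
  delta :: "nat \<Rightarrow> nat option list \<Rightarrow> nat"

definition aut_wf :: "nat \<Rightarrow> fssp_aut \<Rightarrow> bool" where
  "aut_wf k A \<longleftrightarrow>
     finite (states A) \<and> quiescent A \<in> states A \<and>
     (\<forall>i<ngen A. gen A i \<in> states A) \<and>
     firing A \<subseteq> states A \<and> quiescent A \<notin> firing A \<and>
     (\<forall>b. length b = 2*k \<longrightarrow> tau A b < ngen A) \<and>
     (\<forall>s\<in>states A. \<forall>ns. length ns = 2*k \<and> set ns \<subseteq> {None} \<union> Some ` states A
          \<longrightarrow> delta A s ns \<in> states A) \<and>
     (\<forall>ns. length ns = 2*k \<and> set ns \<subseteq> {None, Some (quiescent A)}
          \<longrightarrow> delta A (quiescent A) ns = quiescent A)"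

fun run :: "nat \<Rightarrow> fssp_aut \<Rightarrow> int list set \<Rightarrow> nat \<Rightarrow> int list \<Rightarrow> nat" where
  "run k A C 0 p = (if p = origin k then gen A (tau A (bc k C (origin k))) else quiescent A)"
| "run k A C (Suc t) p = delta A (run k A C t p)
     (map (\<lambda>i. if vadd p (eps k i) \<in> C then Some (run k A C t (vadd p (eps k i))) else None) [0..<2*k])"

definition fires_at :: "nat \<Rightarrow> fssp_aut \<Rightarrow> int list set \<Rightarrow> nat \<Rightarrow> bool" where
  "fires_at k A C t \<longleftrightarrow> (\<forall>p\<in>C. run k A C t p \<in> firing A) \<and>
                        (\<forall>t'<t. \<forall>p\<in>C. run k A C t' p \<notin> firing A)"

definition solution :: "nat \<Rightarrow> int list set set \<Rightarrow> fssp_aut \<Rightarrow> bool" where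
  "solution k \<Gamma> A \<longleftrightarrow> aut_wf k A \<and> (\<forall>C\<in>\<Gamma>. \<exists>t. fires_at k A C t)"

text \<open>Firing time ft(C,A) (the time t_C is unique when it exists).\<close>
definition ft :: "nat \<Rightarrow> int list set \<Rightarrow> fssp_aut \<Rightarrow> nat" where
  "ft k C A = (LEAST t. fires_at k A C t)"

definition mft :: "nat \<Rightarrow> int list set set \<Rightarrow> int list set \<Rightarrow> nat" where
  "mft k \<Gamma> C = (LEAST t. \<exists>A. solution k \<Gamma> A \<and> ft k C A = t)"

definition minimal_time_solution :: "nat \<Rightarrow> int list set set \<Rightarrow> fssp_aut \<Rightarrow> bool" where
  "minimal_time_solution k \<Gamma> A \<longleftrightarrow> solution k \<Gamma> A \<and> (\<forall>C\<in>\<Gamma>. ft k C A = mft k \<Gamma> C)"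

definition mss :: "nat \<Rightarrow> int list set set \<Rightarrow> int list set \<Rightarrow> nat" where
  "mss k \<Gamma> C = (LEAST n. \<exists>A. solution k \<Gamma> A \<and> ft k C A = mft k \<Gamma> C \<and> card (states A) = n)"

end

theory Submission
  imports Defs "HOL-Library.Countable" "HOL-Library.FuncSet"
begin

(*
  A minimal-time solution A gives the bound mss(C) <= card (states A).
  Conversely, if mss is bounded by c, every configuration C is fired at time mft(C)
  by some solution with at most c states, which may be renumbered to use the states
  {0..<c}. Such an automaton affects its runs only through finitely much data (the
  state sets, gen composed with tau on boundary vectors, and delta on arguments that
  can occur), so only finitely many firing-time profiles C |-> ft(C, B) arise, and
  finitely many solutions B_1, ..., B_n attain mft on every configuration. Their
  product, which fires as soon as one component fires, is a minimal-time solution: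
  at the least firing time among the components the fastest one fires at every
  node, and no component fires anywhere earlier.
*)

definition nbhd_vectors :: "nat \<Rightarrow> 'a set \<Rightarrow> 'a option list set" where
  "nbhd_vectors k S = {ns. length ns = 2*k \<and> set ns \<subseteq> {None} \<union> Some ` S}"

lemma aut_wfI:
  assumes "finite (states A)" and "quiescent A \<in> states A"
    and "\<And>i. i < ngen A \<Longrightarrow> gen A i \<in> states A"
    and "firing A \<subseteq> states A" and "quiescent A \<notin> firing A"
    and "\<And>b. length b = 2*k \<Longrightarrow> tau A b < ngen A"
    and "\<And>s ns. s \<in> states A \<Longrightarrow> ns \<in> nbhd_vectors k (states A) \<Longrightarrow> delta A s ns \<in> states A"
    and "\<And>ns. ns \<in> nbhd_vectors k {quiescent A} \<Longrightarrow> delta A (quiescent A) ns = quiescent A"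
  shows "aut_wf k A"
  using assms by (simp add: aut_wf_def nbhd_vectors_def insert_commute)

lemma aut_wf_gen_tau_in_states:
  "aut_wf k A \<Longrightarrow> length b = 2*k \<Longrightarrow> gen A (tau A b) \<in> states A"
  by (simp add: aut_wf_def)

lemma aut_wf_delta_in_states:
  "aut_wf k A \<Longrightarrow> s \<in> states A \<Longrightarrow> ns \<in> nbhd_vectors k (states A) \<Longrightarrow> delta A s ns \<in> states A"
  by (simp add: aut_wf_def nbhd_vectors_def)

lemma aut_wf_delta_quiescent:
  "aut_wf k A \<Longrightarrow> ns \<in> nbhd_vectors k {quiescent A} \<Longrightarrow> delta A (quiescent A) ns = quiescent A"
  by (simp add: aut_wf_def nbhd_vectors_def insert_commute)

lemma map_option_in_nbhd_vectors:
  assumes "ns \<in> nbhd_vectors k S" and "\<And>x. x \<in> S \<Longrightarrow> g x \<in> T"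
  shows "map (map_option g) ns \<in> nbhd_vectors k T"
  using assms by (fastforce simp: nbhd_vectors_def)

lemma finite_nbhd_vectors: "finite S \<Longrightarrow> finite (nbhd_vectors k S)"
  using finite_lists_length_eq[of "{None} \<union> Some ` S" "2*k"]
  by (simp add: nbhd_vectors_def conj_commute)

definition neighbourhood :: "nat \<Rightarrow> int list set \<Rightarrow> (int list \<Rightarrow> 'a) \<Rightarrow> int list \<Rightarrow> 'a option list" where
  "neighbourhood k C x p =
     map (\<lambda>i. if vadd p (eps k i) \<in> C then Some (x (vadd p (eps k i))) else None) [0..<2*k]"

lemma run_Suc: "run k A C (Suc t) p = delta A (run k A C t p) (neighbourhood k C (run k A C t) p)"
  by (simp add: neighbourhood_def)

declare run.simps(2) [simp del]

lemma neighbourhood_in_nbhd_vectors: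
  "(\<And>q. q \<in> C \<Longrightarrow> x q \<in> S) \<Longrightarrow> neighbourhood k C x p \<in> nbhd_vectors k S"
  by (auto simp: neighbourhood_def nbhd_vectors_def)

lemma map_option_neighbourhood:
  "map (map_option g) (neighbourhood k C x p) = neighbourhood k C (\<lambda>q. g (x q)) p"
  by (simp add: neighbourhood_def)

lemma neighbourhood_cong:
  "(\<And>q. q \<in> C \<Longrightarrow> x q = y q) \<Longrightarrow> neighbourhood k C x p = neighbourhood k C y p"
  by (simp add: neighbourhood_def)

lemma run_in_states:
  assumes "aut_wf k A" and "p \<in> C"
  shows "run k A C t p \<in> states A"
  using assms(2)
proof (induction t arbitrary: p)
  case 0
  show ?case
    using assms(1) by (simp add: aut_wf_gen_tau_in_states bc_def aut_wf_def)
next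
  case (Suc t)
  have "neighbourhood k C (run k A C t) p \<in> nbhd_vectors k (states A)"
    using Suc.IH by (rule neighbourhood_in_nbhd_vectors)
  with Suc assms(1) show ?case
    unfolding run_Suc by (blast intro: aut_wf_delta_in_states)
qed

lemma ft_eqI:
  assumes "C \<noteq> {}" and "fires_at k A C t"
  shows "ft k C A = t"
  unfolding ft_def
proof (rule Least_equality)
  show "fires_at k A C t" by fact
  fix t' assume "fires_at k A C t'"
  with assms show "t \<le> t'" unfolding fires_at_def by (meson ex_in_conv not_le)
qed

lemma fires_at_ft: "\<exists>t. fires_at k A C t \<Longrightarrow> fires_at k A C (ft k C A)"
  unfolding ft_def by (rule LeastI_ex)

definition renumber :: "(nat \<Rightarrow> nat) \<Rightarrow> fssp_aut \<Rightarrow> fssp_aut" where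
  "renumber f A =
     \<lparr>states = f ` states A, quiescent = f (quiescent A), ngen = ngen A,
      gen = (\<lambda>i. f (gen A i)), firing = f ` firing A, tau = tau A,
      delta = (\<lambda>s ns. f (delta A (inv_into (states A) f s)
                                 (map (map_option (inv_into (states A) f)) ns)))\<rparr>"

lemma renumber_simps [simp]:
  "states (renumber f A) = f ` states A"
  "quiescent (renumber f A) = f (quiescent A)"
  "ngen (renumber f A) = ngen A"
  "gen (renumber f A) i = f (gen A i)"
  "firing (renumber f A) = f ` firing A"
  "tau (renumber f A) = tau A"
  "delta (renumber f A) s ns =
     f (delta A (inv_into (states A) f s) (map (map_option (inv_into (states A) f)) ns))"
  by (simp_all add: renumber_def)

lemma run_renumber:
  assumes wf: "aut_wf k A" and inj: "inj_on f (states A)" and "p \<in> C"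
  shows "run k (renumber f A) C t p = f (run k A C t p)"
  using assms(3)
proof (induction t arbitrary: p)
  case 0
  then show ?case by simp
next
  case (Suc t)
  let ?g = "inv_into (states A) f"
  have inv: "?g (run k (renumber f A) C t q) = run k A C t q" if "q \<in> C" for q
    using Suc.IH[OF that] run_in_states[OF wf that] inj by simp
  have "run k (renumber f A) C (Suc t) p =
      f (delta A (run k A C t p) (neighbourhood k C (\<lambda>q. ?g (run k (renumber f A) C t q)) p))"
    by (simp add: run_Suc map_option_neighbourhood inv Suc.prems)
  also have "\<dots> = f (run k A C (Suc t) p)"
    unfolding run_Suc by (simp add: inv cong: neighbourhood_cong)
  finally show ?case .
qed

lemma aut_wf_renumber:
  assumes wf: "aut_wf k A" and inj: "inj_on f (states A)"
  shows "aut_wf k (renumber f A)"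
proof -
  let ?g = "inv_into (states A) f"
  have g_in: "?g y \<in> states A" if "y \<in> f ` states A" for y
    using that by (simp add: inv_into_into)
  have g_f: "?g (f x) = x" if "x \<in> states A" for x
    using that inj by simp
  have q: "quiescent A \<in> states A" and fir: "firing A \<subseteq> states A"
    using wf by (simp_all add: aut_wf_def)
  show ?thesis
  proof (rule aut_wfI)
    show "quiescent (renumber f A) \<notin> firing (renumber f A)"
      using wf inj fir q by (simp add: aut_wf_def inj_on_image_mem_iff)
  next
    fix s ns
    assume "s \<in> states (renumber f A)" "ns \<in> nbhd_vectors k (states (renumber f A))"
    then show "delta (renumber f A) s ns \<in> states (renumber f A)"
      using wf g_in map_option_in_nbhd_vectors[of ns k _ ?g] by (simp add: aut_wf_delta_in_states)
  next
    fix ns assume "ns \<in> nbhd_vectors k {quiescent (renumber f A)}"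
    then have "map (map_option ?g) ns \<in> nbhd_vectors k {quiescent A}"
      using g_f[OF q] by (auto intro: map_option_in_nbhd_vectors)
    then show "delta (renumber f A) (quiescent (renumber f A)) ns = quiescent (renumber f A)"
      using wf g_f[OF q] by (simp add: aut_wf_delta_quiescent)
  qed (use wf fir in \<open>auto simp: aut_wf_def\<close>)
qed

lemma fires_at_renumber:
  assumes wf: "aut_wf k A" and inj: "inj_on f (states A)"
  shows "fires_at k (renumber f A) C t \<longleftrightarrow> fires_at k A C t"
proof -
  have "run k (renumber f A) C t' p \<in> firing (renumber f A) \<longleftrightarrow> run k A C t' p \<in> firing A"
    if "p \<in> C" for t' p
    using inj run_in_states[OF wf that] wf
    by (simp add: run_renumber[OF wf inj that] aut_wf_def
        inj_on_image_mem_iff)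
  then show ?thesis unfolding fires_at_def by blast
qed

lemma solution_renumbered:
  assumes "solution k \<Gamma> A"
  obtains B where "solution k \<Gamma> B" and "states B = {0..<card (states A)}"
    and "\<forall>C. ft k C B = ft k C A"
proof -
  have wf: "aut_wf k A" using assms by (simp add: solution_def)
  then have "finite (states A)" by (simp add: aut_wf_def)
  then obtain f where bij: "bij_betw f (states A) {0..<card (states A)}"
    using ex_bij_betw_finite_nat by blast
  then have inj: "inj_on f (states A)" by (rule bij_betw_imp_inj_on)
  have "solution k \<Gamma> (renumber f A)"
    using assms aut_wf_renumber[OF wf inj] fires_at_renumber[OF wf inj]
    by (simp add: solution_def)
  moreover have "states (renumber f A) = {0..<card (states A)}"
    using bij by (simp add: bij_betw_def)
  moreover have "\<forall>C. ft k C (renumber f A) = ft k C A"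
    by (simp add: ft_def fires_at_renumber[OF wf inj])
  ultimately show thesis by (rule that)
qed

(* Everything of B that a run can consult: tau and gen only through gen (tau b) on boundary
   vectors b, and delta only on a state together with a neighbourhood of states. *)
definition aut_core ::
    "nat \<Rightarrow> fssp_aut \<Rightarrow> nat set \<times> nat \<times> nat set \<times> (bool list \<Rightarrow> nat) \<times> (nat \<times> nat option list \<Rightarrow> nat)"
  where
  "aut_core k B = (states B, quiescent B, firing B,
     restrict (\<lambda>b. gen B (tau B b)) {b. length b = 2*k},
     restrict (\<lambda>(s, ns). delta B s ns) (states B \<times> nbhd_vectors k (states B)))"

lemma run_eq_if_aut_core_eq:
  assumes wf: "aut_wf k B" and core: "aut_core k B = aut_core k B'" and "p \<in> C"
  shows "run k B C t p = run k B' C t p"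
  using assms(3)
proof (induction t arbitrary: p)
  case 0
  have "restrict (\<lambda>b. gen B (tau B b)) {b. length b = 2*k} (bc k C (origin k)) =
        restrict (\<lambda>b. gen B' (tau B' b)) {b. length b = 2*k} (bc k C (origin k))"
    using core by (simp add: aut_core_def)
  moreover have "quiescent B = quiescent B'"
    using core by (simp add: aut_core_def)
  ultimately show ?case by (simp add: bc_def)
next
  case (Suc t)
  have "states B = states B'"
    and "restrict (\<lambda>(s, ns). delta B s ns) (states B \<times> nbhd_vectors k (states B)) =
         restrict (\<lambda>(s, ns). delta B' s ns) (states B' \<times> nbhd_vectors k (states B'))"
    using core unfolding aut_core_def prod.inject by blast+
  then have delta_eq: "delta B s ns = delta B' s ns"
    if "s \<in> states B" "ns \<in> nbhd_vectors k (states B)" for s ns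
    using that by (metis (no_types, lifting) SigmaI case_prod_conv restrict_apply')
  have "run k B C (Suc t) p = delta B' (run k B C t p) (neighbourhood k C (run k B C t) p)"
    unfolding run_Suc using Suc.prems wf
    by (intro delta_eq run_in_states neighbourhood_in_nbhd_vectors)
  also have "\<dots> = run k B' C (Suc t) p"
    unfolding run_Suc using Suc by (simp cong: neighbourhood_cong)
  finally show ?case .
qed

lemma ft_eq_if_aut_core_eq:
  assumes "aut_wf k B" and "aut_core k B = aut_core k B'"
  shows "ft k C B = ft k C B'"
proof -
  have "firing B = firing B'"
    using assms(2) by (simp add: aut_core_def)
  then have "fires_at k B C t \<longleftrightarrow> fires_at k B' C t" for t
    unfolding fires_at_def using run_eq_if_aut_core_eq[OF assms] by simp
  then show ?thesis by (simp add: ft_def)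
qed

lemma finite_aut_cores:
  assumes "finite S"
  shows "finite (aut_core k ` {B. aut_wf k B \<and> states B \<subseteq> S})"
proof (rule finite_subset)
  let ?Gens = "PiE {b :: bool list. length b = 2*k} (\<lambda>_. S)"
  let ?Deltas = "\<Union>T\<in>Pow S. PiE (T \<times> nbhd_vectors k T) (\<lambda>_. S)"
  show "aut_core k ` {B. aut_wf k B \<and> states B \<subseteq> S} \<subseteq> Pow S \<times> S \<times> Pow S \<times> ?Gens \<times> ?Deltas"
  proof (rule image_subsetI, clarify)
    fix B assume wf: "aut_wf k B" and sub: "states B \<subseteq> S"
    have "quiescent B \<in> S" and "firing B \<subseteq> S"
      using wf sub by (auto simp: aut_wf_def)
    moreover have "restrict (\<lambda>b. gen B (tau B b)) {b. length b = 2*k} \<in> ?Gens"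
      using wf sub by (auto intro: aut_wf_gen_tau_in_states)
    moreover have "restrict (\<lambda>(s, ns). delta B s ns) (states B \<times> nbhd_vectors k (states B))
        \<in> PiE (states B \<times> nbhd_vectors k (states B)) (\<lambda>_. S)"
      using wf sub by (auto intro: aut_wf_delta_in_states)
    ultimately show "aut_core k B \<in> Pow S \<times> S \<times> Pow S \<times> ?Gens \<times> ?Deltas"
      using sub unfolding aut_core_def by blast
  qed
  have "finite {b :: bool list. length b = 2*k}"
    using finite_lists_length_eq[of "UNIV :: bool set"] by simp
  moreover have "finite ?Deltas"
    using assms by (auto intro!: finite_PiE finite_nbhd_vectors intro: finite_subset)
  ultimately show "finite (Pow S \<times> S \<times> Pow S \<times> ?Gens \<times> ?Deltas)"
    using assms by (intro finite_cartesian_product finite_PiE) auto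
qed

lemma finite_image_if_factors:
  assumes "finite (g ` A)" and "\<And>x y. x \<in> A \<Longrightarrow> y \<in> A \<Longrightarrow> g x = g y \<Longrightarrow> f x = f y"
  shows "finite (f ` A)"
proof (rule finite_surj[OF assms(1)])
  show "f ` A \<subseteq> (\<lambda>z. f (inv_into A g z)) ` g ` A"
  proof (rule image_subsetI)
    fix x assume x: "x \<in> A"
    have "f x = f (inv_into A g (g x))"
      using x by (intro assms(2)) (auto simp: inv_into_into f_inv_into_f)
    then show "f x \<in> (\<lambda>z. f (inv_into A g z)) ` g ` A"
      using x by blast
  qed
qed

lemma finite_ft_profiles:
  assumes "finite S"
  shows "finite ((\<lambda>B C. ft k C B) ` {B. aut_wf k B \<and> states B \<subseteq> S})"
  using finite_aut_cores[OF assms]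
  by (rule finite_image_if_factors) (auto intro: ft_eq_if_aut_core_eq)

definition prod_states :: "fssp_aut list \<Rightarrow> nat list set" where
  "prod_states Bs = {xs. length xs = length Bs \<and> (\<forall>i<length Bs. xs ! i \<in> states (Bs ! i))}"

(* A product state is the list of component states, coded by to_nat; the index of the
   general state is the code of the boundary vector itself, so that every component can
   apply its own tau. The product fires as soon as one component fires: no record of
   earlier firings is needed, since fires_at constrains no time after the firing time. *)
definition prod_aut :: "nat \<Rightarrow> fssp_aut list \<Rightarrow> fssp_aut" where
  "prod_aut k Bs =
     \<lparr>states = to_nat ` prod_states Bs,
      quiescent = to_nat (map quiescent Bs),
      ngen = Suc (Max (to_nat ` {b :: bool list. length b = 2*k})),
      gen = (\<lambda>i. if length (from_nat i :: bool list) = 2*k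
                 then to_nat (map (\<lambda>B. gen B (tau B (from_nat i))) Bs)
                 else to_nat (map quiescent Bs)),
      firing = to_nat ` {xs \<in> prod_states Bs. \<exists>i<length Bs. xs ! i \<in> firing (Bs ! i)},
      tau = to_nat,
      delta = (\<lambda>s ns. to_nat (map (\<lambda>i. delta (Bs ! i) ((from_nat s :: nat list) ! i)
                                (map (map_option (\<lambda>y. (from_nat y :: nat list) ! i)) ns))
                              [0..<length Bs]))\<rparr>"

lemma prod_aut_simps [simp]:
  "states (prod_aut k Bs) = to_nat ` prod_states Bs"
  "quiescent (prod_aut k Bs) = to_nat (map quiescent Bs)"
  "ngen (prod_aut k Bs) = Suc (Max (to_nat ` {b :: bool list. length b = 2*k}))"
  "length b = 2*k \<Longrightarrow> gen (prod_aut k Bs) (to_nat b) = to_nat (map (\<lambda>B. gen B (tau B b)) Bs)"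
  "firing (prod_aut k Bs) = to_nat ` {xs \<in> prod_states Bs. \<exists>i<length Bs. xs ! i \<in> firing (Bs ! i)}"
  "tau (prod_aut k Bs) = to_nat"
  "delta (prod_aut k Bs) s ns =
     to_nat (map (\<lambda>i. delta (Bs ! i) ((from_nat s :: nat list) ! i)
                  (map (map_option (\<lambda>y. (from_nat y :: nat list) ! i)) ns)) [0..<length Bs])"
  by (simp_all add: prod_aut_def)

lemma map_nth_upt: "map (\<lambda>i. f (xs ! i)) [0..<length xs] = map f xs"
  by (rule nth_equalityI) simp_all

lemma run_prod_aut:
  assumes "p \<in> C"
  shows "run k (prod_aut k Bs) C t p = to_nat (map (\<lambda>B. run k B C t p) Bs)"
  using assms
proof (induction t arbitrary: p)
  case 0
  then show ?case by (simp add: bc_def)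
next
  case (Suc t)
  let ?P = "prod_aut k Bs"
  have comp: "(from_nat (run k ?P C t q) :: nat list) ! i = run k (Bs ! i) C t q"
    if "q \<in> C" "i < length Bs" for q i
    using Suc.IH that by simp
  have "run k ?P C (Suc t) p = to_nat (map (\<lambda>i. delta (Bs ! i) ((from_nat (run k ?P C t p) :: nat list) ! i)
      (neighbourhood k C (\<lambda>q. (from_nat (run k ?P C t q) :: nat list) ! i) p)) [0..<length Bs])"
    by (simp add: run_Suc map_option_neighbourhood)
  also have "\<dots> = to_nat (map (\<lambda>i. run k (Bs ! i) C (Suc t) p) [0..<length Bs])"
    unfolding run_Suc using Suc.prems comp by (simp cong: neighbourhood_cong)
  finally show ?case by (simp add: map_nth_upt[of "\<lambda>B. run k B C (Suc t) p"])
qed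

lemma run_prod_aut_in_firing:
  assumes wf: "\<forall>B\<in>set Bs. aut_wf k B" and "p \<in> C"
  shows "run k (prod_aut k Bs) C t p \<in> firing (prod_aut k Bs) \<longleftrightarrow>
         (\<exists>B\<in>set Bs. run k B C t p \<in> firing B)"
proof -
  have "map (\<lambda>B. run k B C t p) Bs \<in> prod_states Bs"
    using wf assms(2) by (simp add: prod_states_def run_in_states)
  moreover have "(\<exists>i<length Bs. map (\<lambda>B. run k B C t p) Bs ! i \<in> firing (Bs ! i)) \<longleftrightarrow>
                 (\<exists>B\<in>set Bs. run k B C t p \<in> firing B)"
    by (metis in_set_conv_nth nth_map)
  ultimately show ?thesis
    by (simp add: run_prod_aut[OF assms(2)] inj_image_mem_iff[OF inj_to_nat])
qed

lemma fires_at_prod_aut: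
  assumes wf: "\<forall>B\<in>set Bs. aut_wf k B" and fires: "\<forall>B\<in>set Bs. \<exists>t. fires_at k B C t"
    and B0: "B0 \<in> set Bs" and fastest: "\<forall>B\<in>set Bs. ft k C B0 \<le> ft k C B"
  shows "fires_at k (prod_aut k Bs) C (ft k C B0)"
proof -
  have "run k B0 C (ft k C B0) p \<in> firing B0" if "p \<in> C" for p
    using fires_at_ft[of k B0 C] fires B0 that by (simp add: fires_at_def)
  moreover have "run k B C t p \<notin> firing B"
    if "B \<in> set Bs" "t < ft k C B0" "p \<in> C" for B t p
    using fires_at_ft[of k B C] fires fastest that
    by (simp add: fires_at_def) (meson order_less_le_trans)
  ultimately show ?thesis
    unfolding fires_at_def using B0 run_prod_aut_in_firing[OF wf] by blast
qed


lemma finite_prod_states: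
  assumes "\<forall>B\<in>set Bs. finite (states B)"
  shows "finite (prod_states Bs)"
proof (rule finite_subset)
  show "prod_states Bs \<subseteq> {xs. set xs \<subseteq> (\<Union>B\<in>set Bs. states B) \<and> length xs = length Bs}"
    by (auto simp: prod_states_def in_set_conv_nth) (metis nth_mem)
  show "finite {xs. set xs \<subseteq> (\<Union>B\<in>set Bs. states B) \<and> length xs = length Bs}"
    using assms by (intro finite_lists_length_eq) simp
qed

lemma aut_wf_prod_aut:
  assumes wf: "\<forall>B\<in>set Bs. aut_wf k B"
  shows "aut_wf k (prod_aut k Bs)"
proof (rule aut_wfI)
  let ?P = "prod_aut k Bs"
  have wf_nth: "aut_wf k (Bs ! i)" if "i < length Bs" for i
    using wf that by simp
  have quiescent_in: "map quiescent Bs \<in> prod_states Bs"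
    using wf_nth by (simp add: prod_states_def aut_wf_def)
  show "finite (states ?P)"
    using wf by (simp add: finite_prod_states aut_wf_def)
  show "quiescent ?P \<in> states ?P"
    using quiescent_in by simp
  show "gen ?P i \<in> states ?P" for i
  proof (cases "length (from_nat i :: bool list) = 2*k")
    case True
    then have "map (\<lambda>B. gen B (tau B (from_nat i))) Bs \<in> prod_states Bs"
      using wf_nth True by (auto simp: prod_states_def intro: aut_wf_gen_tau_in_states)
    then show ?thesis using True by (simp add: prod_aut_def)
  next
    case False
    then show ?thesis using quiescent_in by (simp add: prod_aut_def)
  qed
  show "firing ?P \<subseteq> states ?P"
    by auto
  show "quiescent ?P \<notin> firing ?P"
    using wf_nth by (auto simp: inj_image_mem_iff[OF inj_to_nat] aut_wf_def)
  show "tau ?P b < ngen ?P" if "length b = 2*k" for b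
    using that finite_lists_length_eq[of "UNIV :: bool set" "2*k"]
    by (simp add: le_imp_less_Suc)
  show "delta ?P s ns \<in> states ?P"
    if "s \<in> states ?P" and "ns \<in> nbhd_vectors k (states ?P)" for s ns
  proof -
    have "map (map_option (\<lambda>y. (from_nat y :: nat list) ! i)) ns \<in> nbhd_vectors k (states (Bs ! i))"
      if "i < length Bs" for i
      using \<open>ns \<in> _\<close> \<open>i < length Bs\<close>
      by (auto intro!: map_option_in_nbhd_vectors simp: prod_states_def)
    moreover obtain xs where "s = to_nat xs" and "xs \<in> prod_states Bs"
      using \<open>s \<in> _\<close> by auto
    moreover have "map (\<lambda>i. delta (Bs ! i) (xs ! i)
        (map (map_option (\<lambda>y. (from_nat y :: nat list) ! i)) ns)) [0..<length Bs] \<in> prod_states Bs"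
      using calculation wf_nth by (auto simp: prod_states_def intro: aut_wf_delta_in_states)
    ultimately show ?thesis by simp
  qed
  show "delta ?P (quiescent ?P) ns = quiescent ?P"
    if "ns \<in> nbhd_vectors k {quiescent ?P}" for ns
  proof -
    have "map (map_option (\<lambda>y. (from_nat y :: nat list) ! i)) ns \<in> nbhd_vectors k {quiescent (Bs ! i)}"
      if "i < length Bs" for i
      using \<open>ns \<in> _\<close> \<open>i < length Bs\<close> by (auto intro!: map_option_in_nbhd_vectors)
    then have "delta (Bs ! i) (quiescent (Bs ! i))
        (map (map_option (\<lambda>y. (from_nat y :: nat list) ! i)) ns) = quiescent (Bs ! i)"
      if "i < length Bs" for i
      using that wf_nth aut_wf_delta_quiescent by blast
    then have "map (\<lambda>i. delta (Bs ! i) (map quiescent Bs ! i)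
        (map (map_option (\<lambda>y. (from_nat y :: nat list) ! i)) ns)) [0..<length Bs] = map quiescent Bs"
      by (intro nth_equalityI) simp_all
    then show ?thesis by simp
  qed
qed


lemma mft_le_ft: "solution k \<Gamma> B \<Longrightarrow> mft k \<Gamma> C \<le> ft k C B"
  unfolding mft_def by (rule Least_le) blast

lemma mss_attained:
  assumes "\<exists>A. solution k \<Gamma> A"
  obtains A where "solution k \<Gamma> A" and "ft k C A = mft k \<Gamma> C" and "card (states A) = mss k \<Gamma> C"
proof -
  have "\<exists>t A. solution k \<Gamma> A \<and> ft k C A = t"
    using assms by blast
  then have "\<exists>A. solution k \<Gamma> A \<and> ft k C A = mft k \<Gamma> C"
    unfolding mft_def by (rule LeastI_ex)
  then have "\<exists>n A. solution k \<Gamma> A \<and> ft k C A = mft k \<Gamma> C \<and> card (states A) = n"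
    by blast
  then have "\<exists>A. solution k \<Gamma> A \<and> ft k C A = mft k \<Gamma> C \<and> card (states A) = mss k \<Gamma> C"
    unfolding mss_def by (rule LeastI_ex)
  with that show thesis by blast
qed

lemma mss_le_card_states:
  assumes "minimal_time_solution k \<Gamma> A" and "C \<in> \<Gamma>"
  shows "mss k \<Gamma> C \<le> card (states A)"
  using assms unfolding mss_def minimal_time_solution_def by (intro Least_le) blast

lemma minimal_time_solution_prod_aut:
  assumes "variation k \<Gamma>" and sols: "\<forall>B\<in>set Bs. solution k \<Gamma> B"
    and attained: "\<forall>C\<in>\<Gamma>. \<exists>B\<in>set Bs. ft k C B = mft k \<Gamma> C"
  shows "minimal_time_solution k \<Gamma> (prod_aut k Bs)"
proof -
  have wf: "\<forall>B\<in>set Bs. aut_wf k B"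
    using sols by (simp add: solution_def)
  have fires: "fires_at k (prod_aut k Bs) C (mft k \<Gamma> C)" if C: "C \<in> \<Gamma>" for C
  proof -
    obtain B0 where B0_in: "B0 \<in> set Bs" and B0: "ft k C B0 = mft k \<Gamma> C"
      using attained C by blast
    have "\<forall>B\<in>set Bs. \<exists>t. fires_at k B C t"
      using sols C by (simp add: solution_def)
    moreover have "\<forall>B\<in>set Bs. ft k C B0 \<le> ft k C B"
      using sols by (simp add: B0 mft_le_ft)
    ultimately have "fires_at k (prod_aut k Bs) C (ft k C B0)"
      by (rule fires_at_prod_aut[OF wf _ B0_in])
    with B0 show ?thesis by simp
  qed
  moreover have "ft k C (prod_aut k Bs) = mft k \<Gamma> C" if "C \<in> \<Gamma>" for C
  proof (rule ft_eqI)
    show "C \<noteq> {}"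
      using assms(1) that unfolding variation_def by blast
  qed (rule fires[OF that])
  ultimately show ?thesis
    using aut_wf_prod_aut[OF wf] by (auto simp: minimal_time_solution_def solution_def)
qed

lemma bounded_mss_imp_attaining_solutions:
  assumes "\<exists>A. solution k \<Gamma> A" and bound: "\<forall>C\<in>\<Gamma>. mss k \<Gamma> C \<le> c"
  obtains Bs where "\<forall>B\<in>set Bs. solution k \<Gamma> B" and "\<forall>C\<in>\<Gamma>. \<exists>B\<in>set Bs. ft k C B = mft k \<Gamma> C"
proof -
  let ?R = "{B. solution k \<Gamma> B \<and> states B \<subseteq> {0..<c}}"
  let ?profile = "\<lambda>B C. ft k C B"
  have "finite (?profile ` ?R)"
    by (rule finite_subset[OF image_mono finite_ft_profiles[of "{0..<c}" k]])
      (auto simp: solution_def)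
  from finite_subset_image[OF this order_refl]
  obtain F where F: "F \<subseteq> ?R" "finite F" "?profile ` ?R = ?profile ` F"
    by blast
  obtain Bs where Bs: "set Bs = F"
    using finite_list[OF F(2)] by blast
  have "\<forall>B\<in>set Bs. solution k \<Gamma> B"
    using Bs F(1) by blast
  moreover have "\<forall>C\<in>\<Gamma>. \<exists>B\<in>set Bs. ft k C B = mft k \<Gamma> C"
  proof
    fix C assume C: "C \<in> \<Gamma>"
    obtain A where A: "solution k \<Gamma> A" "ft k C A = mft k \<Gamma> C" "card (states A) = mss k \<Gamma> C"
      using assms(1) by (rule mss_attained)
    obtain B where B: "solution k \<Gamma> B" "states B = {0..<card (states A)}" "\<forall>C. ft k C B = ft k C A"
      using A(1) by (rule solution_renumbered)
    have "B \<in> ?R"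
      using B(1,2) A(3) bound C by auto
    then have "?profile B \<in> ?profile ` F"
      unfolding F(3)[symmetric] by (rule imageI)
    then obtain B' where "B' \<in> F" and "?profile B = ?profile B'"
      by (rule imageE)
    then have "B' \<in> set Bs" and "ft k C B' = ft k C B"
      using Bs by (simp_all add: fun_eq_iff)
    with A(2) B(3) show "\<exists>B\<in>set Bs. ft k C B = mft k \<Gamma> C" by auto
  qed
  ultimately show thesis
    by (rule that)
qed

theorem theorem18:
  fixes k :: nat and \<Gamma> :: "int list set set"
  assumes "k \<ge> 1"
    and "variation k \<Gamma>"
    and "\<exists>A. solution k \<Gamma> A"
  shows "(\<exists>A. minimal_time_solution k \<Gamma> A) \<longleftrightarrow> (\<exists>c::nat. \<forall>C\<in>\<Gamma>. mss k \<Gamma> C \<le> c)"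
proof
  assume "\<exists>A. minimal_time_solution k \<Gamma> A"
  then show "\<exists>c::nat. \<forall>C\<in>\<Gamma>. mss k \<Gamma> C \<le> c"
    using mss_le_card_states by blast
next
  assume "\<exists>c::nat. \<forall>C\<in>\<Gamma>. mss k \<Gamma> C \<le> c"
  then obtain c where "\<forall>C\<in>\<Gamma>. mss k \<Gamma> C \<le> c" by blast
  with assms(3) obtain Bs where "\<forall>B\<in>set Bs. solution k \<Gamma> B"
    and "\<forall>C\<in>\<Gamma>. \<exists>B\<in>set Bs. ft k C B = mft k \<Gamma> C"
    by (rule bounded_mss_imp_attaining_solutions)
  then show "\<exists>A. minimal_time_solution k \<Gamma> A"
    using minimal_time_solution_prod_aut[OF assms(2)] by blast
qed

end
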